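(* Assume the AGD setting below with controlled step-size parameters (conditions (A1)–(A4) with constants $\alpha,\epsilon_F,\epsilon_B$), and let $c_1,c_2>0$. Suppose there is an update to $p_j$ at time $t$, and let $\Phi^-$ and $\Phi^+$ be the values of the potential $\Phi$ just before and just after this update. Let the updates in $(\tau_j,t)$ be to coordinates $k_1,\dots,k_m$ at times $\beta_1<\dots<\beta_m$. Then $$\Phi^--\Phi^+\ge\Big(1-\frac1\alpha-2\epsilon_B-c_1(1+4\epsilon_B)-2\epsilon_F\Big)\frac{\gamma_j^t(\Delta p_j)^2}{\Delta t_j}+\big(1-c_2-c_1(2+8\epsilon_B)\big)\sum_{i=1}^m\xi_j^{\beta_i}H_{k_ij}^{[\beta_i,t]}(p_j^t)\frac{(\Delta p_{k_i})^2}{\Delta t_{k_i}}.$$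
   Context: Let $\phi:\mathbb{R}^n\to\mathbb{R}$ be a twice continuously differentiable convex function whose minimum value is $0$. Asynchronous gradient descent (AGD) runs in continuous time $t\ge0$ from $p^0$; each coordinate $p_j$ is changed only at discrete update times, no two updates occur simultaneously. For a quantity changed at time $t$, superscript $t$ or $t-$ denotes its value just before and $t+$ just after; $p^t$ is the current point just before any update at time $t$. For an update to $p_j$ at time $t$, $\tau_j$ is the time of the previous update to $p_j$ ($0$ if none), $\Delta t_j=t-\tau_j\le1$ always. $P_j^{[t_1,t_2]}(s)$ is the box of points $p'$ with $p'_j=s$ and, for $k\ne j$, $p'_k$ ranging over the closed interval spanned by $\{p_k^{t'}:t'\in[t_1,t_2]\}$. Update rule: $p_j^{t+}=p_j^t-\frac{\tilde g_j(t)}{\gamma_j^t}\Delta t_j$, $\tilde g_j(t)=\nabla_j\phi(\tilde p^{j,t})$ for some $\tilde p^{j,t}\in P_j^{[\tau_j,t]}(p_j^t)$, $\gamma_j^t>0$; $\Delta p_j=p_j^{t+}-p_j^t$; $g_j(t)=\nabla_j\phi(p^t)$. $H_{k\ell}(S)=\sup_{p'\in S}|\partial^2\phi/\partial p_k\partial p_\ell(p')|$, $H_{k\ell}^{[t_1,t_2]}(s)=H_{k\ell}(P_\ell^{[t_1,t_2]}(s))$. Controlled: constants $\alpha\ge2$, $\epsilon_F,\epsilon_B>0$, $\frac1\alpha+2\epsilon_B+2\epsilon_F<1$, and for each update of $p_j$ at time $t$ positive numbers $\{\xi_k^t\}_{k\ne j}$, with: (A1) for every $p'$ with $p'_k=p_k^t$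 ($k\ne j$) and $p'_j$ between $p_j^t$ and $p_j^{t+}$, $\phi(p')-\phi(p^t)-\nabla_j\phi(p^t)(p'_j-p_j^t)\le\frac{\gamma_j^t}{\alpha}(p'_j-p_j^t)^2$; (A2) $\gamma_j^t\le\bar\gamma_j<\infty$ for all update times of $p_j$; (A3) $\sum_{k\ne j}\xi_k^tH_{jk}^{[t,\sigma_k]}(p_k^t)\le\epsilon_F\gamma_j^t$, $\sigma_k>t$ the next update time of $p_k$; (A4) if the updates in $(\tau_j,t)$ are to $k_1,\dots,k_m$ at times $\beta_1<\dots<\beta_m$ and $\xi_j^{\beta_i}$ is the number assigned to coordinate $j$ at the update at time $\beta_i$, then $\sum_{k\ne j}(\max_{i:k_i=k}1/\xi_j^{\beta_i})H_{kj}^{[\tau_j,t]}(p_j^t)\le\epsilon_B\gamma_j^t$ (empty max read as $0$). Potential: at any time $t$ (with, for each $j$, $\tau_j$ the time of the most recent update to $p_j$ so far and $\sigma_j$ the time of the next update to $p_j$ after $\tau_j$), $$\Phi=\phi(p^t)-c_1\sum_j\int_{\tau_j}^t\frac{(g_j(t'))^2}{\bar\gamma_j}dt'+\sum_j\sum_i\xi_j^{\beta_i}H_{k_ij}^{[\beta_i,\sigma_j]}(p_j^{\tau_j+})\frac{(\Delta p_{k_i})^2}{\Delta t_{k_i}}\big[2-c_2(t-\beta_i)\big],$$ where for each $j$ the index $i$ runs over all updates, at times $\beta_i\in(\tau_j,t]$, to coordinates $k_i\ne j$, and $\Delta p_{k_i},\Delta t_{k_i}$ are the change and elapsed time of that update.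 *)

theory Defs
  imports "HOL-Analysis.Analysis"
begin

text \<open>AGD process: update number k (k = 0,1,2,...) happens at time T k to coordinate J k;
  p k is the point after the first k updates (p 0 is the starting point), so p k is the
  point just before update k and p (Suc k) the point just after it.\<close>

definition pt :: "(nat \<Rightarrow> real) \<Rightarrow> (nat \<Rightarrow> real^'n) \<Rightarrow> real \<Rightarrow> real^'n" where
  "pt T p s = p (card {k. T k < s})"

definition last_upd :: "(nat \<Rightarrow> real) \<Rightarrow> (nat \<Rightarrow> 'n) \<Rightarrow> nat \<Rightarrow> 'n \<Rightarrow> real" where
  "last_upd T J c j = (if \<exists>m<c. J m = j then T (GREATEST m. m < c \<and> J m = j) else 0)"

definition next_upd :: "(nat \<Rightarrow> real) \<Rightarrow> (nat \<Rightarrow> 'n) \<Rightarrow> 'n \<Rightarrow> real \<Rightarrow> real" where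
  "next_upd T J j s = T (LEAST m. s < T m \<and> J m = j)"

definition dt :: "(nat \<Rightarrow> real) \<Rightarrow> (nat \<Rightarrow> 'n) \<Rightarrow> nat \<Rightarrow> real" where
  "dt T J k = T k - last_upd T J k (J k)"

definition dp :: "(nat \<Rightarrow> real^'n) \<Rightarrow> (nat \<Rightarrow> 'n) \<Rightarrow> nat \<Rightarrow> real" where
  "dp p J k = p (Suc k) $ J k - p k $ J k"

definition agd_box :: "(nat \<Rightarrow> real) \<Rightarrow> (nat \<Rightarrow> real^'n) \<Rightarrow> 'n \<Rightarrow> real \<Rightarrow> real \<Rightarrow> real \<Rightarrow> (real^'n) set" where
  "agd_box T p j t1 t2 s = {x. x $ j = s \<and>
     (\<forall>i. i \<noteq> j \<longrightarrow> x $ i \<in> closure (convex hull ((\<lambda>t'. pt T p t' $ i) ` {t1..t2})))}"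

text \<open>H_{kl}(S), with Hs x the Hessian of phi at x.\<close>
definition Hsup :: "(real^'n \<Rightarrow> real^'n^'n) \<Rightarrow> 'n \<Rightarrow> 'n \<Rightarrow> (real^'n) set \<Rightarrow> real" where
  "Hsup Hs k l S = Sup ((\<lambda>x. \<bar>Hs x $ k $ l\<bar>) ` S)"

definition Hbox :: "(real^'n \<Rightarrow> real^'n^'n) \<Rightarrow> (nat \<Rightarrow> real) \<Rightarrow> (nat \<Rightarrow> real^'n)
    \<Rightarrow> 'n \<Rightarrow> 'n \<Rightarrow> real \<Rightarrow> real \<Rightarrow> real \<Rightarrow> real" where
  "Hbox Hs T p k l t1 t2 s = Hsup Hs k l (agd_box T p l t1 t2 s)"

text \<open>Potential at time s in the state where the first c updates have been performed.\<close>
definition Phi :: "(real^'n::finite \<Rightarrow> real) \<Rightarrow> (real^'n \<Rightarrow> real^'n) \<Rightarrow> (real^'n \<Rightarrow> real^'n^'n)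
    \<Rightarrow> (nat \<Rightarrow> real) \<Rightarrow> (nat \<Rightarrow> 'n) \<Rightarrow> (nat \<Rightarrow> real^'n) \<Rightarrow> ('n \<Rightarrow> real)
    \<Rightarrow> (nat \<Rightarrow> 'n \<Rightarrow> real) \<Rightarrow> real \<Rightarrow> real \<Rightarrow> nat \<Rightarrow> real \<Rightarrow> real" where
  "Phi \<phi> G Hs T J p \<gamma>bar \<xi> c1 c2 c s =
     \<phi> (p c)
     - c1 * (\<Sum>j\<in>UNIV. integral {last_upd T J c j .. s} (\<lambda>t'. (G (pt T p t') $ j)\<^sup>2 / \<gamma>bar j))
     + (\<Sum>j\<in>UNIV. \<Sum>m\<in>{m. m < c \<and> last_upd T J c j < T m}.
          \<xi> m j * Hbox Hs T p (J m) j (T m) (next_upd T J j (last_upd T J c j)) (p c $ j)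
            * (dp p J m)\<^sup>2 / dt T J m * (2 - c2 * (s - T m)))"

end

theory Submission
  imports Defs
begin

text \<open>
  If update q of coordinate j used the current gradient g_j(t), (A1) would make \<phi> drop by about
  \<gamma> (\<Delta>p_j)^2/\<Delta>t_j. It uses instead \<nabla>_j\<phi> at a point of the box P_j^[\<tau>_j,t]. Walking from that
  point to p^t one coordinate at a time, in the order of the updates k_1, ..., k_m, and applying the
  mean value theorem to \<nabla>_j\<phi> bounds the error by the drift \<Sum>_i H_{k_i j}^[\<beta>_i,t] |\<Delta>p_{k_i}|; the same
  bound holds for g_j along the trajectory in (\<tau>_j, t]. By Cauchy-Schwarz with the weights \<xi>, the
  square of the drift is at most (\<Sum>_i H \<Delta>t_{k_i} / \<xi>_j^\<beta>_i) times the sum Q on the right-hand side;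
  the updates of one coordinate inside (\<tau>_j, t) have elapsed times summing to at most 2, so (A4)
  bounds the first factor by 2 \<epsilon>_B \<gamma>. AM-GM then absorbs the drift into \<gamma> (\<Delta>p_j)^2/\<Delta>t_j and Q, both
  in the decrease of \<phi> and in the integral of g_j^2 that the update removes from \<Phi>. The Z-terms
  created for the other coordinates are paid by (A3), and the surviving ones lose at most c_2 Q
  because t - \<beta>_i \<le> 1.
\<close>

section \<open>Second derivatives along coordinate axes\<close>

lemma has_real_derivative_along_line:
  fixes f :: "real^'n::finite \<Rightarrow> real"
  assumes "\<And>x. (f has_derivative (\<lambda>h. D x \<bullet> h)) (at x)"
  shows "((\<lambda>s. f (x + s *\<^sub>R v)) has_real_derivative (D (x + s *\<^sub>R v) \<bullet> v)) (at s)"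
proof -
  have "((\<lambda>s. x + s *\<^sub>R v) has_derivative (\<lambda>h. h *\<^sub>R v)) (at s)"
    by (auto intro!: derivative_eq_intros)
  from diff_chain_at[OF this assms] show ?thesis
    unfolding has_field_derivative_def o_def
    by (rule has_derivative_eq_rhs) (auto simp: fun_eq_iff inner_scaleR_right)
qed

lemma has_real_derivative_component_along_line:
  fixes F :: "real^'n::finite \<Rightarrow> real^'n"
  assumes "\<And>x. (F has_derivative (\<lambda>h. H x *v h)) (at x)"
  shows "((\<lambda>s. F (x + s *\<^sub>R v) $ i) has_real_derivative ((H (x + s *\<^sub>R v) *v v) $ i)) (at s)"
proof -
  have "((\<lambda>s. x + s *\<^sub>R v) has_derivative (\<lambda>h. h *\<^sub>R v)) (at s)"
    by (auto intro!: derivative_eq_intros)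
  moreover have "((\<lambda>y. F y $ i) has_derivative (\<lambda>h. (H y *v h) $ i)) (at y)" for y
    using bounded_linear.has_derivative[OF bounded_linear_vec_nth assms] .
  ultimately show ?thesis
    unfolding has_field_derivative_def
    by (rule has_derivative_eq_rhs[OF diff_chain_at[unfolded o_def]])
      (auto simp: fun_eq_iff matrix_vector_mult_def sum_distrib_left mult_ac)
qed

lemma axis_zero [simp]: "axis i 0 = 0"
  by (simp add: vec_eq_iff axis_def)

lemma scaleR_axis_one: "s *\<^sub>R axis a (1::real) = axis a s"
  by (simp add: vec_eq_iff axis_def)

lemma matrix_vector_mult_axis_nth: "((A::real^'n::finite^'n) *v axis k c) $ j = A $ j $ k * c"
  by (simp add: matrix_vector_mult_def axis_def if_distrib cong: if_cong)

lemma second_difference_eq_hessian: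
  fixes \<phi> :: "real^'n::finite \<Rightarrow> real"
  assumes grad: "\<And>x. (\<phi> has_derivative (\<lambda>h. G x \<bullet> h)) (at x)"
    and hess: "\<And>x. (G has_derivative (\<lambda>h. Hs x *v h)) (at x)"
    and h: "0 < h"
  obtains y where "norm (y - x) \<le> 2 * h"
    "\<phi> (x + axis b h + axis a h) - \<phi> (x + axis a h) - \<phi> (x + axis b h) + \<phi> x = h * h * Hs y $ a $ b"
proof -
  define F where "F s = \<phi> (x + axis b h + axis a s) - \<phi> (x + axis a s)" for s
  have dF: "(F has_real_derivative (G (x + axis b h + axis a s) $ a - G (x + axis a s) $ a)) (at s)" for s
    unfolding F_def
    using DERIV_diff[OF has_real_derivative_along_line[OF grad, where x="x + axis b h" and v="axis a 1"]
        has_real_derivative_along_line[OF grad, where x=x and v="axis a 1"]]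
    by (simp add: scaleR_axis_one inner_axis)
  obtain \<sigma> where \<sigma>: "0 < \<sigma>" "\<sigma> < h"
    "F h - F 0 = h * (G (x + axis b h + axis a \<sigma>) $ a - G (x + axis a \<sigma>) $ a)"
    using MVT2[OF h dF] by auto
  define g where "g v = G (x + axis a \<sigma> + axis b v) $ a" for v
  have dg: "(g has_real_derivative Hs (x + axis a \<sigma> + axis b v) $ a $ b) (at v)" for v
    unfolding g_def
    using has_real_derivative_component_along_line[OF hess, where x="x + axis a \<sigma>" and s=v and v="axis b 1"]
    by (simp add: scaleR_axis_one matrix_vector_mult_axis_nth)
  obtain \<nu> where \<nu>: "0 < \<nu>" "\<nu> < h" "g h - g 0 = h * Hs (x + axis a \<sigma> + axis b \<nu>) $ a $ b"
    using MVT2[OF h dg] by auto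
  define y where "y = x + axis a \<sigma> + axis b \<nu>"
  have "norm (y - x) \<le> norm (axis a \<sigma> :: real^'n) + norm (axis b \<nu> :: real^'n)"
    unfolding y_def using norm_triangle_ineq by simp
  also have "\<dots> \<le> 2 * h"
    using \<sigma> \<nu> unfolding scaleR_axis_one[of \<sigma>, symmetric] scaleR_axis_one[of \<nu>, symmetric] by simp
  finally have "norm (y - x) \<le> 2 * h" .
  have "\<phi> (x + axis b h + axis a h) - \<phi> (x + axis a h) - \<phi> (x + axis b h) + \<phi> x = F h - F 0"
    by (simp add: F_def)
  also have "\<dots> = h * (g h - g 0)"
    using \<sigma>(3) by (simp add: g_def add_ac)
  also have "\<dots> = h * h * Hs y $ a $ b"
    using \<nu>(3) by (simp add: y_def)
  finally show ?thesis by (rule that[OF \<open>norm (y - x) \<le> 2 * h\<close>])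
qed

lemma hessian_symmetric:
  fixes \<phi> :: "real^'n::finite \<Rightarrow> real"
  assumes grad: "\<And>x. (\<phi> has_derivative (\<lambda>h. G x \<bullet> h)) (at x)"
    and hess: "\<And>x. (G has_derivative (\<lambda>h. Hs x *v h)) (at x)"
    and cont: "continuous_on UNIV Hs"
  shows "Hs x $ a $ b = Hs x $ b $ a"
proof (rule ccontr)
  assume "Hs x $ a $ b \<noteq> Hs x $ b $ a"
  then have e: "\<bar>Hs x $ a $ b - Hs x $ b $ a\<bar> / 2 > 0" by simp
  obtain d where d: "d > 0" "\<And>y. dist y x < d \<Longrightarrow> dist (Hs y) (Hs x) < \<bar>Hs x $ a $ b - Hs x $ b $ a\<bar> / 2"
    using cont e unfolding continuous_on_iff by (metis UNIV_I)
  have near: "\<bar>Hs y $ i $ k - Hs x $ i $ k\<bar> < \<bar>Hs x $ a $ b - Hs x $ b $ a\<bar> / 2"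
    if "norm (y - x) \<le> d / 2" for y i k
  proof -
    have "\<bar>(Hs y - Hs x) $ i $ k\<bar> \<le> norm (Hs y - Hs x)"
      using component_le_norm_cart Finite_Cartesian_Product.norm_nth_le order_trans by blast
    also have "\<dots> < \<bar>Hs x $ a $ b - Hs x $ b $ a\<bar> / 2"
      using d that by (simp add: dist_norm)
    finally show ?thesis by simp
  qed
  have h: "d / 4 > 0" using d by simp
  obtain y1 where y1: "norm (y1 - x) \<le> 2 * (d / 4)"
    "\<phi> (x + axis b (d/4) + axis a (d/4)) - \<phi> (x + axis a (d/4)) - \<phi> (x + axis b (d/4)) + \<phi> x
      = d / 4 * (d / 4) * Hs y1 $ a $ b"
    using second_difference_eq_hessian[OF grad hess h] .
  obtain y2 where y2: "norm (y2 - x) \<le> 2 * (d / 4)"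
    "\<phi> (x + axis a (d/4) + axis b (d/4)) - \<phi> (x + axis b (d/4)) - \<phi> (x + axis a (d/4)) + \<phi> x
      = d / 4 * (d / 4) * Hs y2 $ b $ a"
    using second_difference_eq_hessian[OF grad hess h] .
  have "Hs y1 $ a $ b = Hs y2 $ b $ a"
    using y1(2) y2(2) d(1) by (simp add: algebra_simps)
  then have "\<bar>Hs x $ a $ b - Hs x $ b $ a\<bar>
      = \<bar>(Hs y2 $ b $ a - Hs x $ b $ a) - (Hs y1 $ a $ b - Hs x $ a $ b)\<bar>"
    by simp
  also have "\<dots> \<le> \<bar>Hs y2 $ b $ a - Hs x $ b $ a\<bar> + \<bar>Hs y1 $ a $ b - Hs x $ a $ b\<bar>"
    by (rule abs_triangle_ineq4)
  finally have "\<bar>Hs x $ a $ b - Hs x $ b $ a\<bar>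
      \<le> \<bar>Hs y2 $ b $ a - Hs x $ b $ a\<bar> + \<bar>Hs y1 $ a $ b - Hs x $ a $ b\<bar>" .
  moreover have "\<bar>Hs y1 $ a $ b - Hs x $ a $ b\<bar> < \<bar>Hs x $ a $ b - Hs x $ b $ a\<bar> / 2"
    "\<bar>Hs y2 $ b $ a - Hs x $ b $ a\<bar> < \<bar>Hs x $ a $ b - Hs x $ b $ a\<bar> / 2"
    using near y1(1) y2(1) by auto
  ultimately show False
    using add_strict_mono[of "\<bar>Hs y2 $ b $ a - Hs x $ b $ a\<bar>" _ "\<bar>Hs y1 $ a $ b - Hs x $ a $ b\<bar>"] by simp
qed

lemma gradient_component_change_along_axis:
  fixes \<phi> :: "real^'n::finite \<Rightarrow> real"
  assumes grad: "\<And>x. (\<phi> has_derivative (\<lambda>h. G x \<bullet> h)) (at x)"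
    and hess: "\<And>x. (G has_derivative (\<lambda>h. Hs x *v h)) (at x)"
    and cont: "continuous_on UNIV Hs"
    and same: "\<And>i. i \<noteq> k \<Longrightarrow> y' $ i = y $ i"
    and bound: "\<And>w. w \<in> closed_segment y y' \<Longrightarrow> \<bar>Hs w $ k $ j\<bar> \<le> H"
  shows "\<bar>G y' $ j - G y $ j\<bar> \<le> H * \<bar>y' $ k - y $ k\<bar>"
proof -
  define d where "d = y' $ k - y $ k"
  have y': "y' = y + axis k d" unfolding d_def vec_eq_iff using same by (auto simp: axis_def)
  define g where "g u = G (y + u *\<^sub>R axis k d) $ j" for u
  have "(g has_real_derivative Hs (y + u *\<^sub>R axis k d) $ k $ j * d) (at u)" for u
    unfolding g_def
    using has_real_derivative_component_along_line[OF hess, where x=y and s=u and v="axis k d" and i=j]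
      hessian_symmetric[OF grad hess cont, of "y + u *\<^sub>R axis k d" j k]
    by (simp add: matrix_vector_mult_axis_nth)
  then obtain u where u: "0 < u" "u < 1" "g 1 - g 0 = Hs (y + u *\<^sub>R axis k d) $ k $ j * d"
    using MVT2[OF zero_less_one] by force
  have "y + u *\<^sub>R axis k d \<in> closed_segment y y'"
    unfolding closed_segment_def y' using u by (intro CollectI exI[of _ u]) (auto simp: algebra_simps)
  then have "\<bar>Hs (y + u *\<^sub>R axis k d) $ k $ j\<bar> \<le> H" by (rule bound)
  moreover have "G y' $ j - G y $ j = Hs (y + u *\<^sub>R axis k d) $ k $ j * d"
    using u(3) by (simp add: g_def y')
  ultimately show ?thesis
    unfolding d_def[symmetric] by (simp add: abs_mult mult_right_mono)
qed

section \<open>The update schedule\<close>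

lemma last_upd_obtain:
  assumes "\<exists>m<c. J m = j"
  obtains r where "r < c" "J r = j" "last_upd T J c j = T r" "\<And>m. r < m \<Longrightarrow> m < c \<Longrightarrow> J m \<noteq> j"
proof -
  define r where "r = (GREATEST m. m < c \<and> J m = j)"
  have r: "r < c \<and> J r = j"
    unfolding r_def using assms by (metis (mono_tags, lifting) GreatestI_nat less_imp_le_nat)
  have "m \<le> r" if "m < c" "J m = j" for m
    unfolding r_def using that by (metis (mono_tags, lifting) Greatest_le_nat less_imp_le_nat)
  with r show ?thesis
    using assms that by (auto simp: last_upd_def r_def not_le[symmetric])
qed

lemma last_upd_none: "\<not> (\<exists>m<c. J m = j) \<Longrightarrow> last_upd T J c j = 0"
  unfolding last_upd_def by auto

lemma last_upd_Suc_other: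
  assumes "i \<noteq> J q"
  shows "last_upd T J (Suc q) i = last_upd T J q i"
proof -
  have ex: "(\<exists>m<Suc q. J m = i) = (\<exists>m<q. J m = i)"
    using assms less_Suc_eq by auto
  have "(GREATEST m. m < Suc q \<and> J m = i) = (GREATEST m. m < q \<and> J m = i)"
    by (rule arg_cong[where f=Greatest]) (use assms less_Suc_eq in auto)
  then show ?thesis unfolding last_upd_def ex by (rule arg_cong)
qed

lemma sum_diff_split:
  fixes f g :: "'a \<Rightarrow> 'b::ab_group_add"
  shows "finite A \<Longrightarrow> j \<in> A \<Longrightarrow>
    (\<Sum>i\<in>A. f i) - (\<Sum>i\<in>A. g i) = f j - g j + (\<Sum>i\<in>A - {j}. f i - g i)"
  by (simp add: sum_subtractf sum.remove algebra_simps)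

locale agd_schedule =
  fixes T :: "nat \<Rightarrow> real" and J :: "nat \<Rightarrow> 'n::finite" and p :: "nat \<Rightarrow> real^'n"
  assumes T_mono: "strict_mono T" and T_pos: "0 < T 0"
    and upd_other: "\<And>k i. i \<noteq> J k \<Longrightarrow> p (Suc k) $ i = p k $ i"
begin

text \<open>The updates in the open interval (\<tau>_j, t) of the paper, for update q of coordinate j = J q.\<close>

abbreviation recent :: "nat \<Rightarrow> nat set" where
  "recent q \<equiv> {m. m < q \<and> last_upd T J q (J q) < T m}"

lemma T_less_iff [simp]: "T m < T n \<longleftrightarrow> m < n"
  using T_mono by (rule strict_mono_less)

lemma T_le_iff [simp]: "T m \<le> T n \<longleftrightarrow> m \<le> n"
  using T_mono by (rule strict_mono_less_eq)

lemma T_positive: "0 < T m"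
  using T_pos T_le_iff[of 0 m] by linarith

lemma pt_at_update: "pt T p (T r) = p r"
proof -
  have "{k. T k < T r} = {..<r}" by auto
  then show ?thesis by (simp add: pt_def)
qed

lemma card_updates_before_le:
  assumes "t' \<le> T n"
  shows "card {k. T k < t'} \<le> n"
proof -
  have "{k. T k < t'} \<subseteq> {..<n}"
    using assms by (auto simp flip: T_less_iff)
  then show ?thesis
    using card_mono[OF finite_lessThan] by (metis card_lessThan)
qed

lemma pt_before_update: "t' \<le> T n \<Longrightarrow> pt T p t' \<in> p ` {..n}"
  unfolding pt_def using card_updates_before_le by (intro imageI) simp

lemma pt_between_updates:
  assumes "T r < t'" "t' \<le> T n"
  shows "pt T p t' \<in> p ` {Suc r..n}"
proof -
  have fin: "finite {k. T k < t'}"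
    by (rule finite_subset[of _ "{..<n}"]) (use assms in \<open>auto simp flip: T_less_iff\<close>)
  have "{..r} \<subseteq> {k. T k < t'}"
    using assms by (auto intro: le_less_trans simp flip: T_le_iff)
  then have "Suc r \<le> card {k. T k < t'}"
    using card_mono[OF fin] by (metis card_atMost)
  then show ?thesis
    unfolding pt_def using card_updates_before_le[OF assms(2)] by (intro imageI) simp
qed

lemma p_nth_unchanged:
  assumes "a \<le> b" "\<And>m. a \<le> m \<Longrightarrow> m < b \<Longrightarrow> J m \<noteq> i"
  shows "p b $ i = p a $ i"
  using assms
proof (induction b)
  case (Suc b)
  show ?case
  proof (cases "a = Suc b")
    case False
    with Suc.prems have "a \<le> b" "J b \<noteq> i" by auto
    with Suc show ?thesis using upd_other[of i b] by auto
  qed simp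
qed simp

lemma last_upd_less: "last_upd T J c j < T c"
proof (cases "\<exists>m<c. J m = j")
  case True
  then show ?thesis by (rule last_upd_obtain[of c J j T]) simp
next
  case False
  then show ?thesis using T_positive by (simp add: last_upd_none)
qed

lemma last_upd_ge: "m < c \<Longrightarrow> J m = j \<Longrightarrow> T m \<le> last_upd T J c j"
  by (rule last_upd_obtain[of c J j T]) (auto simp: not_less[symmetric])

lemma last_upd_le_prev: "last_upd T J (Suc q) i \<le> T q"
proof (cases "\<exists>m<Suc q. J m = i")
  case True
  then show ?thesis by (rule last_upd_obtain[of "Suc q" J i T]) simp
next
  case False
  then show ?thesis using T_positive[of q] by (simp add: last_upd_none)
qed

lemma last_upd_Suc_same: "last_upd T J (Suc q) (J q) = T q"
proof (rule last_upd_obtain[of "Suc q" J "J q" T])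
  fix r assume "r < Suc q" "last_upd T J (Suc q) (J q) = T r" "\<And>m. r < m \<Longrightarrow> m < Suc q \<Longrightarrow> J m \<noteq> J q"
  then show ?thesis by (cases "r < q") (auto simp: less_Suc_eq)
qed auto

lemma next_upd_last_upd: "next_upd T J (J q) (last_upd T J q (J q)) = T q"
proof -
  have "(LEAST m. last_upd T J q (J q) < T m \<and> J m = J q) = q"
  proof (rule Least_equality)
    show "last_upd T J q (J q) < T q \<and> J q = J q" using last_upd_less by simp
  next
    fix y assume "last_upd T J q (J q) < T y \<and> J y = J q"
    then show "q \<le> y" using last_upd_ge[of y q "J q"] by (meson leI not_le)
  qed
  then show ?thesis by (simp add: next_upd_def)
qed

lemma next_upd_Suc_other:
  assumes "i \<noteq> J q"
  shows "next_upd T J i (last_upd T J (Suc q) i) = next_upd T J i (T q)"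
proof -
  have "last_upd T J (Suc q) i < T m \<longleftrightarrow> T q < T m" if "J m = i" for m
  proof
    assume "last_upd T J (Suc q) i < T m"
    then have "\<not> m < Suc q" using last_upd_ge[of m "Suc q" i] that by linarith
    then show "T q < T m" by simp
  qed (use last_upd_le_prev[of q i] in linarith)
  then have "(\<lambda>m. last_upd T J (Suc q) i < T m \<and> J m = i) = (\<lambda>m. T q < T m \<and> J m = i)"
    by blast
  then show ?thesis unfolding next_upd_def by simp
qed

lemma dt_pos: "0 < dt T J m"
  unfolding dt_def using last_upd_less by simp

lemma dt_le_gap: "m' < m \<Longrightarrow> J m' = J m \<Longrightarrow> dt T J m \<le> T m - T m'"
  unfolding dt_def using last_upd_ge[of m' m "J m"] by simp

lemma sum_dt_same_coordinate:
  assumes dt_le_1: "\<And>k. dt T J k \<le> 1"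
    and "finite A" "A \<noteq> {}" "\<And>m. m \<in> A \<Longrightarrow> J m = k"
  shows "(\<Sum>m\<in>A. dt T J m) \<le> 1 + T (Max A) - T (Min A)"
  using assms(2-4)
proof (induction A rule: finite_linorder_max_induct)
  case (insert b A)
  show ?case
  proof (cases "A = {}")
    case True
    then show ?thesis using dt_le_1 by simp
  next
    case False
    have max: "Max A \<in> A" "Max A < b" and "Min A < b" using False insert.hyps by auto
    have "dt T J b \<le> T b - T (Max A)"
      using max insert.prems(2) by (intro dt_le_gap) auto
    moreover have "(\<Sum>m\<in>A. dt T J m) \<le> 1 + T (Max A) - T (Min A)"
      using False insert by simp
    moreover have "Max (insert b A) = b" "Min (insert b A) = Min A"
      using False insert.hyps \<open>Min A < b\<close> by (auto intro: Max_insert2)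
    moreover have "b \<notin> A" using insert.hyps by auto
    ultimately show ?thesis using insert.hyps by simp
  qed
qed simp

lemma recent_window:
  obtains lo where "lo \<le> q" "recent q = {lo..<q}" "\<And>m. lo \<le> m \<Longrightarrow> m < q \<Longrightarrow> J m \<noteq> J q"
    "\<And>t'. last_upd T J q (J q) < t' \<Longrightarrow> t' \<le> T q \<Longrightarrow> pt T p t' \<in> p ` {lo..q}"
    "\<And>t' i. last_upd T J q (J q) \<le> t' \<Longrightarrow> t' \<le> T q \<Longrightarrow> i \<noteq> J q
       \<Longrightarrow> pt T p t' $ i \<in> (\<lambda>r. p r $ i) ` {lo..q}"
proof (cases "\<exists>m<q. J m = J q")
  case True
  then obtain r0 where r0: "r0 < q" "J r0 = J q" "last_upd T J q (J q) = T r0"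
    "\<And>m. r0 < m \<Longrightarrow> m < q \<Longrightarrow> J m \<noteq> J q"
    by (rule last_upd_obtain[of q J "J q" T]) blast+
  have after: "pt T p t' \<in> p ` {Suc r0..q}" if "T r0 < t'" "t' \<le> T q" for t'
    using pt_between_updates[OF that] .
  have at: "pt T p (T r0) $ i = p (Suc r0) $ i" if "i \<noteq> J q" for i
    using upd_other[of i r0] that r0(2) by (simp add: pt_at_update)
  show ?thesis
  proof (rule that[of "Suc r0"])
    show "recent q = {Suc r0..<q}" unfolding r0(3) by auto
    show "\<And>t' i. last_upd T J q (J q) \<le> t' \<Longrightarrow> t' \<le> T q \<Longrightarrow> i \<noteq> J q
       \<Longrightarrow> pt T p t' $ i \<in> (\<lambda>r. p r $ i) ` {Suc r0..q}"
      unfolding r0(3) using after at r0(1) by (fastforce simp: order_le_less)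
  qed (use r0 after in auto)
next
  case False
  then have none: "last_upd T J q (J q) = 0" by (rule last_upd_none)
  show ?thesis
  proof (rule that[of 0])
    show "recent q = {0..<q}" using none T_positive by auto
    show "\<And>t' i. last_upd T J q (J q) \<le> t' \<Longrightarrow> t' \<le> T q \<Longrightarrow> i \<noteq> J q
       \<Longrightarrow> pt T p t' $ i \<in> (\<lambda>r. p r $ i) ` {0..q}"
      using pt_before_update[of _ q] by (fastforce simp: atLeast0AtMost)
  qed (use False pt_before_update[of _ q] in \<open>auto simp: atLeast0AtMost\<close>)
qed

text \<open>
  Update q restarts the integral and the Z-terms of coordinate J q and appends one Z-term to every
  other coordinate.
\<close>

lemma Phi_step_eq:
  "Phi \<phi> G Hs T J p \<gamma>bar \<xi> c1 c2 q (T q) - Phi \<phi> G Hs T J p \<gamma>bar \<xi> c1 c2 (Suc q) (T q) =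
   \<phi> (p q) - \<phi> (p (Suc q))
   - c1 * integral {last_upd T J q (J q) .. T q} (\<lambda>t'. (G (pt T p t') $ J q)\<^sup>2 / \<gamma>bar (J q))
   + (\<Sum>m\<in>recent q. \<xi> m (J q) * Hbox Hs T p (J m) (J q) (T m) (T q) (p q $ J q)
        * (dp p J m)\<^sup>2 / dt T J m * (2 - c2 * (T q - T m)))
   - (\<Sum>i\<in>UNIV - {J q}. \<xi> q i * Hbox Hs T p (J q) i (T q) (next_upd T J i (T q)) (p q $ i)
        * (dp p J q)\<^sup>2 / dt T J q * (2 - c2 * (T q - T q)))"
proof -
  define I where "I c i = integral {last_upd T J c i .. T q} (\<lambda>t'. (G (pt T p t') $ i)\<^sup>2 / \<gamma>bar i)" for c i
  define Z where "Z c i = (\<Sum>m\<in>{m. m < c \<and> last_upd T J c i < T m}.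
          \<xi> m i * Hbox Hs T p (J m) i (T m) (next_upd T J i (last_upd T J c i)) (p c $ i)
            * (dp p J m)\<^sup>2 / dt T J m * (2 - c2 * (T q - T m)))" for c i
  define W where "W i = \<xi> q i * Hbox Hs T p (J q) i (T q) (next_upd T J i (T q)) (p q $ i)
        * (dp p J q)\<^sup>2 / dt T J q * (2 - c2 * (T q - T q))" for i
  have I_new: "I (Suc q) (J q) = 0"
    unfolding I_def last_upd_Suc_same by simp
  have I_other: "I (Suc q) i = I q i" if "i \<noteq> J q" for i
    unfolding I_def using last_upd_Suc_other[where T=T and J=J and q=q, OF that] by simp
  have Z_new: "Z (Suc q) (J q) = 0"
  proof -
    have "{m. m < Suc q \<and> last_upd T J (Suc q) (J q) < T m} = {}"
      unfolding last_upd_Suc_same by auto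
    then show ?thesis unfolding Z_def by (simp only: sum.empty)
  qed
  have Z_other: "Z (Suc q) i = Z q i + W i" if "i \<noteq> J q" for i
  proof -
    have "{m. m < Suc q \<and> last_upd T J q i < T m} = insert q {m. m < q \<and> last_upd T J q i < T m}"
      using last_upd_less[of q i] less_Suc_eq by auto
    moreover have "next_upd T J i (last_upd T J q i) = next_upd T J i (T q)"
      using next_upd_Suc_other[OF that] last_upd_Suc_other[where T=T and J=J and q=q, OF that] by simp
    ultimately show ?thesis
      unfolding Z_def W_def last_upd_Suc_other[where T=T and J=J and q=q, OF that] upd_other[OF that]
      by (simp add: sum.insert)
  qed
  have Z_old: "Z q (J q) = (\<Sum>m\<in>recent q. \<xi> m (J q) * Hbox Hs T p (J m) (J q) (T m) (T q) (p q $ J q)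
        * (dp p J m)\<^sup>2 / dt T J m * (2 - c2 * (T q - T m)))"
    unfolding Z_def next_upd_last_upd ..
  have I_diff: "(\<Sum>i\<in>UNIV. I q i) - (\<Sum>i\<in>UNIV. I (Suc q) i) = I q (J q)"
    using sum_diff_split[of UNIV "J q" "I q" "I (Suc q)"] I_new I_other by (simp add: sum.neutral)
  have Z_diff: "(\<Sum>i\<in>UNIV. Z q i) - (\<Sum>i\<in>UNIV. Z (Suc q) i) = Z q (J q) - (\<Sum>i\<in>UNIV - {J q}. W i)"
    using sum_diff_split[of UNIV "J q" "Z q" "Z (Suc q)"] Z_new Z_other by (simp add: sum_negf)
  have "Phi \<phi> G Hs T J p \<gamma>bar \<xi> c1 c2 c (T q) = \<phi> (p c) - c1 * (\<Sum>i\<in>UNIV. I c i) + (\<Sum>i\<in>UNIV. Z c i)" for c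
    unfolding Phi_def I_def Z_def ..
  then have "Phi \<phi> G Hs T J p \<gamma>bar \<xi> c1 c2 q (T q) - Phi \<phi> G Hs T J p \<gamma>bar \<xi> c1 c2 (Suc q) (T q)
     = \<phi> (p q) - \<phi> (p (Suc q)) - c1 * ((\<Sum>i\<in>UNIV. I q i) - (\<Sum>i\<in>UNIV. I (Suc q) i))
       + ((\<Sum>i\<in>UNIV. Z q i) - (\<Sum>i\<in>UNIV. Z (Suc q) i))"
    by (simp add: algebra_simps)
  then show ?thesis
    unfolding I_diff Z_diff Z_old by (simp add: I_def W_def)
qed

end

section \<open>Boxes and bounds on the Hessian\<close>

lemma closure_convex_hull_subset_interval:
  fixes S :: "real set"
  assumes "S \<subseteq> {a..b}"
  shows "closure (convex hull S) \<subseteq> {a..b}"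
  by (rule closure_minimal[OF hull_minimal[OF assms]]) (auto simp: convex_real_interval)

lemma agd_box_convex: "convex (agd_box T p j t1 t2 s)"
proof (rule convexI)
  fix x y and u v :: real
  assume box: "x \<in> agd_box T p j t1 t2 s" "y \<in> agd_box T p j t1 t2 s"
    and uv: "0 \<le> u" "0 \<le> v" "u + v = 1"
  have "u *\<^sub>R x $ i + v *\<^sub>R y $ i \<in> closure (convex hull ((\<lambda>t'. pt T p t' $ i) ` {t1..t2}))"
    if "i \<noteq> j" for i
    using box uv that by (intro convexD[OF convex_closure[OF convex_convex_hull]]) (auto simp: agd_box_def)
  with box uv show "u *\<^sub>R x + v *\<^sub>R y \<in> agd_box T p j t1 t2 s"
    unfolding agd_box_def by (auto simp flip: distrib_right)
qed

lemma pt_nth_in_hull: "t' \<in> {t1..t2} \<Longrightarrow> pt T p t' $ i \<in> closure (convex hull ((\<lambda>t'. pt T p t' $ i) ` {t1..t2}))"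
  by (rule subsetD[OF closure_subset], rule hull_inc) simp

lemma agd_box_nonempty: "t1 \<le> t2 \<Longrightarrow> (\<chi> i. if i = j then s else pt T p t2 $ i) \<in> agd_box T p j t1 t2 s"
  unfolding agd_box_def using pt_nth_in_hull[of t2 t1 t2] by auto

lemma agd_box_antimono:
  assumes "t1' \<le> t1"
  shows "agd_box T p j t1 t2 s \<subseteq> agd_box T p j t1' t2 s"
proof -
  have "closure (convex hull ((\<lambda>t'. pt T p t' $ i) ` {t1..t2}))
      \<subseteq> closure (convex hull ((\<lambda>t'. pt T p t' $ i) ` {t1'..t2}))" for i
    using assms by (intro closure_mono hull_mono image_mono) auto
  then show ?thesis unfolding agd_box_def by blast
qed

lemma Hsup_upper: "bdd_above ((\<lambda>x. \<bar>Hs x $ k $ l\<bar>) ` S) \<Longrightarrow> x \<in> S \<Longrightarrow> \<bar>Hs x $ k $ l\<bar> \<le> Hsup Hs k l S"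
  unfolding Hsup_def by (rule cSUP_upper)

lemma Hsup_nonneg: "bdd_above ((\<lambda>x. \<bar>Hs x $ k $ l\<bar>) ` S) \<Longrightarrow> x \<in> S \<Longrightarrow> 0 \<le> Hsup Hs k l S"
  using Hsup_upper[of Hs k l S x] by linarith

lemma Hsup_mono:
  "bdd_above ((\<lambda>x. \<bar>Hs x $ k $ l\<bar>) ` S') \<Longrightarrow> S \<noteq> {} \<Longrightarrow> S \<subseteq> S' \<Longrightarrow> Hsup Hs k l S \<le> Hsup Hs k l S'"
  unfolding Hsup_def by (rule cSup_subset_mono) auto

lemma bdd_above_abs_hessian:
  fixes Hs :: "real^'n::finite \<Rightarrow> real^'n^'n"
  assumes "continuous_on UNIV Hs" "bounded S"
  shows "bdd_above ((\<lambda>x. \<bar>Hs x $ k $ l\<bar>) ` S)"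
proof -
  have "compact (Hs ` closure S)"
    using assms by (intro compact_continuous_image continuous_on_subset[OF assms(1)]) auto
  then have "bounded (Hs ` closure S)" by (rule compact_imp_bounded)
  then obtain C where C: "\<forall>y\<in>Hs ` closure S. norm y \<le> C" unfolding bounded_iff ..
  have "\<bar>Hs x $ k $ l\<bar> \<le> C" if "x \<in> S" for x
  proof -
    have "\<bar>Hs x $ k $ l\<bar> \<le> norm (Hs x $ k)" by (rule component_le_norm_cart)
    also have "\<dots> \<le> norm (Hs x)" by (rule Finite_Cartesian_Product.norm_nth_le)
    also have "\<dots> \<le> C" using C closure_subset that by blast
    finally show ?thesis .
  qed
  then show ?thesis by (auto simp: bdd_above_def)
qed

context agd_schedule
begin

lemma agd_box_bounded: "bounded (agd_box T p j t1 (T n) s)"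
proof -
  define B where "B = \<bar>s\<bar> + (\<Sum>i\<in>UNIV. \<Sum>r\<in>{..n}. \<bar>p r $ i\<bar>)"
  have p_le: "\<bar>p r $ i\<bar> \<le> B" if "r \<le> n" for r i
  proof -
    have "\<bar>p r $ i\<bar> \<le> (\<Sum>r\<in>{..n}. \<bar>p r $ i\<bar>)"
      using that by (intro member_le_sum) auto
    also have "\<dots> \<le> (\<Sum>i\<in>UNIV. \<Sum>r\<in>{..n}. \<bar>p r $ i\<bar>)"
      by (intro member_le_sum) (auto intro: sum_nonneg)
    finally show ?thesis unfolding B_def by simp
  qed
  have coord: "\<bar>x $ i\<bar> \<le> B" if x: "x \<in> agd_box T p j t1 (T n) s" for x i
  proof (cases "i = j")
    case True
    have "0 \<le> (\<Sum>i\<in>UNIV. \<Sum>r\<in>{..n}. \<bar>p r $ i\<bar>)" by (intro sum_nonneg) auto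
    then show ?thesis using x True unfolding agd_box_def B_def by simp
  next
    case False
    have "pt T p t' $ i \<in> {-B..B}" if t': "t' \<le> T n" for t'
    proof -
      obtain r where "r \<le> n" "pt T p t' = p r" using pt_before_update[OF t'] by auto
      then show ?thesis using p_le[of r i] by (simp add: abs_le_iff)
    qed
    then have "(\<lambda>t'. pt T p t' $ i) ` {t1..T n} \<subseteq> {-B..B}" by auto
    then have "closure (convex hull ((\<lambda>t'. pt T p t' $ i) ` {t1..T n})) \<subseteq> {-B..B}"
      by (rule closure_convex_hull_subset_interval)
    moreover have "x $ i \<in> closure (convex hull ((\<lambda>t'. pt T p t' $ i) ` {t1..T n}))"
      using x False unfolding agd_box_def by blast
    ultimately have "x $ i \<in> {-B..B}" by blast
    then show ?thesis by (simp add: abs_le_iff)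
  qed
  have "norm x \<le> CARD('n) * B" if "x \<in> agd_box T p j t1 (T n) s" for x
  proof -
    have "norm x \<le> (\<Sum>i\<in>UNIV. \<bar>x $ i\<bar>)" by (rule norm_le_l1_cart)
    also have "\<dots> \<le> (\<Sum>i\<in>(UNIV::'n set). B)" using coord[OF that] by (intro sum_mono)
    finally show ?thesis by simp
  qed
  then show ?thesis unfolding bounded_iff by blast
qed

lemma p_nth_in_hull: "r \<le> r' \<Longrightarrow> r' \<le> q \<Longrightarrow> p r' $ i \<in> closure (convex hull ((\<lambda>t'. pt T p t' $ i) ` {T r..T q}))"
  using pt_nth_in_hull[of "T r'" "T r" "T q" T p i] by (simp add: pt_at_update)

end

section \<open>Drift of the gradient across a box\<close>

lemma closed_segment_real_split:
  fixes x a b c :: real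
  assumes "x \<in> closed_segment a c" "x \<notin> closed_segment b c"
  shows "x \<in> closed_segment a b"
  using assms by (auto simp: closed_segment_eq_real_ivl split: if_splits)

lemma closed_segment_real_cases:
  fixes x a b c :: real
  assumes "x \<in> {a..b}" "c \<in> {a..b}"
  shows "x \<in> closed_segment a c \<or> x \<in> closed_segment b c"
  using assms by (auto simp: closed_segment_eq_real_ivl)

lemma real_crossing_index:
  fixes v :: "nat \<Rightarrow> real"
  assumes "lo \<le> q" and x: "x \<in> closure (convex hull (v ` {lo..q}))"
  obtains s where "lo \<le> s" "s \<le> q" "s < q \<Longrightarrow> x \<in> closed_segment (v s) (v (Suc s))" "s = q \<Longrightarrow> x = v q"
proof -
  define V where "V = v ` {lo..q}"
  define P where "P s \<longleftrightarrow> lo \<le> s \<and> s \<le> q \<and> x \<in> closed_segment (v s) (v q)" for s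
  have V: "finite V" "V \<noteq> {}" "v q \<in> V" unfolding V_def using assms(1) by auto
  obtain a b where ab: "a \<in> {lo..q}" "b \<in> {lo..q}" "v a = Min V" "v b = Max V"
    using Min_in[OF V(1,2)] Max_in[OF V(1,2)] unfolding V_def by (metis imageE)
  have "V \<subseteq> {Min V..Max V}" using V(1) by auto
  then have "x \<in> {Min V..Max V}"
    using closure_convex_hull_subset_interval x unfolding V_def by blast
  moreover have "v q \<in> {Min V..Max V}" using V by auto
  ultimately have "x \<in> closed_segment (v a) (v q) \<or> x \<in> closed_segment (v b) (v q)"
    unfolding ab(3,4) by (rule closed_segment_real_cases)
  then have ex: "\<exists>s. P s"
    using ab by (auto simp: P_def)
  have bound: "\<And>s. P s \<Longrightarrow> s \<le> q" unfolding P_def by blast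
  define s where "s = (GREATEST s. P s)"
  have s: "P s"
    unfolding s_def using GreatestI_ex_nat[OF ex bound] .
  have "\<not> P (Suc s)"
    using Greatest_le_nat[of P "Suc s" q] bound unfolding s_def[symmetric] by fastforce
  have step: "x \<in> closed_segment (v s) (v (Suc s))" if "s < q"
  proof (rule closed_segment_real_split)
    show "x \<in> closed_segment (v s) (v q)" using s unfolding P_def by simp
    show "x \<notin> closed_segment (v (Suc s)) (v q)"
      using \<open>\<not> P (Suc s)\<close> s that unfolding P_def by simp
  qed
  show ?thesis
  proof (rule that[OF _ _ step])
    show "lo \<le> s" "s \<le> q" using s unfolding P_def by simp_all
    show "x = v q" if "s = q" using s that unfolding P_def by simp
  qed
qed

context agd_schedule
begin

text \<open>
  Each coordinate i \<noteq> j of a point x of the box lies between two consecutive trajectory values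
  p (s i) $ i and p (Suc (s i)) $ i. The staircase from x to p q switches coordinate i from x $ i to
  the trajectory once the crossing index s i is passed, so its step from r to Suc r moves only the
  coordinate J r updated at r.
\<close>

definition crossing_indices :: "nat \<Rightarrow> nat \<Rightarrow> 'n \<Rightarrow> real^'n \<Rightarrow> ('n \<Rightarrow> nat) \<Rightarrow> bool" where
  "crossing_indices lo q j x s \<longleftrightarrow> (\<forall>i. i \<noteq> j \<longrightarrow> lo \<le> s i \<and> s i \<le> q
     \<and> (s i < q \<longrightarrow> x $ i \<in> closed_segment (p (s i) $ i) (p (Suc (s i)) $ i))
     \<and> (s i = q \<longrightarrow> x $ i = p q $ i))"

definition staircase :: "nat \<Rightarrow> 'n \<Rightarrow> real^'n \<Rightarrow> ('n \<Rightarrow> nat) \<Rightarrow> nat \<Rightarrow> real^'n" where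
  "staircase q j x s r = (\<chi> i. if i = j then p q $ j else if s i < r then p r $ i else x $ i)"

lemma crossing_indices_exist:
  assumes "lo \<le> q" "\<And>i. i \<noteq> j \<Longrightarrow> x $ i \<in> closure (convex hull ((\<lambda>r. p r $ i) ` {lo..q}))"
  obtains s where "crossing_indices lo q j x s"
proof -
  have "\<exists>s. i \<noteq> j \<longrightarrow> lo \<le> s \<and> s \<le> q
     \<and> (s < q \<longrightarrow> x $ i \<in> closed_segment (p s $ i) (p (Suc s) $ i)) \<and> (s = q \<longrightarrow> x $ i = p q $ i)" for i
  proof (cases "i = j")
    case False
    show ?thesis by (rule real_crossing_index[OF assms(1) assms(2)[OF False]]) blast
  qed simp
  then obtain s where "\<forall>i. i \<noteq> j \<longrightarrow> lo \<le> s i \<and> s i \<le> q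
     \<and> (s i < q \<longrightarrow> x $ i \<in> closed_segment (p (s i) $ i) (p (Suc (s i)) $ i)) \<and> (s i = q \<longrightarrow> x $ i = p q $ i)"
    by metis
  then show ?thesis by (intro that) (simp add: crossing_indices_def)
qed

lemma staircase_start: "x $ j = p q $ j \<Longrightarrow> crossing_indices lo q j x s \<Longrightarrow> staircase q j x s lo = x"
  by (auto simp: vec_eq_iff staircase_def crossing_indices_def not_less)

lemma staircase_end: "crossing_indices lo q j x s \<Longrightarrow> staircase q j x s q = p q"
  by (auto simp: vec_eq_iff staircase_def crossing_indices_def order_le_less)

lemma staircase_step_other:
  assumes "crossing_indices lo q j x s" "r < q" "i \<noteq> J r"
  shows "staircase q j x s (Suc r) $ i = staircase q j x s r $ i"
proof -
  have "p (Suc r) $ i = p r $ i" using upd_other[OF assms(3)] .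
  moreover have "x $ i = p r $ i" if "i \<noteq> j" "s i = r"
    using assms(1,2) that \<open>p (Suc r) $ i = p r $ i\<close> by (auto simp: crossing_indices_def)
  ultimately show ?thesis by (auto simp: staircase_def less_Suc_eq)
qed

lemma staircase_step_moved:
  assumes "crossing_indices lo q j x s" "r < q" "J r \<noteq> j"
  shows "\<bar>staircase q j x s (Suc r) $ J r - staircase q j x s r $ J r\<bar> \<le> \<bar>dp p J r\<bar>"
proof -
  consider "s (J r) < r" | "s (J r) = r" | "r < s (J r)" by linarith
  then show ?thesis
  proof cases
    case 2
    then have "x $ J r \<in> closed_segment (p r $ J r) (p (Suc r) $ J r)"
      using assms by (auto simp: crossing_indices_def)
    then show ?thesis
      using 2 assms(3) by (auto simp: staircase_def dp_def closed_segment_eq_real_ivl split: if_splits)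
  qed (use assms(3) in \<open>auto simp: staircase_def dp_def\<close>)
qed

lemma crossing_value_in_hull:
  assumes "crossing_indices lo q j x s" "i \<noteq> j" "r \<le> s i"
  shows "x $ i \<in> closure (convex hull ((\<lambda>t'. pt T p t' $ i) ` {T r..T q}))"
proof (cases "s i < q")
  case True
  then have "x $ i \<in> closed_segment (p (s i) $ i) (p (Suc (s i)) $ i)"
    using assms by (auto simp: crossing_indices_def)
  moreover have "closed_segment (p (s i) $ i) (p (Suc (s i)) $ i)
      \<subseteq> closure (convex hull ((\<lambda>t'. pt T p t' $ i) ` {T r..T q}))"
    using True assms(3) by (intro closed_segment_subset p_nth_in_hull) auto
  ultimately show ?thesis by blast
next
  case False
  then have "x $ i = p q $ i" "r \<le> q" using assms by (auto simp: crossing_indices_def)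
  then show ?thesis by (simp add: p_nth_in_hull)
qed

lemma staircase_in_box:
  assumes "crossing_indices lo q j x s" "r < q" "r' \<in> {r, Suc r}"
  shows "staircase q j x s r' \<in> agd_box T p j (T r) (T q) (p q $ j)"
proof -
  have "staircase q j x s r' $ i \<in> closure (convex hull ((\<lambda>t'. pt T p t' $ i) ` {T r..T q}))"
    if "i \<noteq> j" for i
  proof (cases "s i < r'")
    case True
    then show ?thesis using that assms(2,3) by (auto simp: staircase_def intro: p_nth_in_hull)
  next
    case False
    then show ?thesis
      using that assms crossing_value_in_hull[OF assms(1) that, of r] by (auto simp: staircase_def)
  qed
  then show ?thesis by (auto simp: agd_box_def staircase_def)
qed

end

locale agd_c2 = agd_schedule T J p
  for T :: "nat \<Rightarrow> real" and J :: "nat \<Rightarrow> 'n::finite" and p :: "nat \<Rightarrow> real^'n" +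
  fixes \<phi> :: "real^'n \<Rightarrow> real" and G :: "real^'n \<Rightarrow> real^'n" and Hs :: "real^'n \<Rightarrow> real^'n^'n"
  assumes grad: "\<And>x. (\<phi> has_derivative (\<lambda>h. G x \<bullet> h)) (at x)"
    and hess: "\<And>x. (G has_derivative (\<lambda>h. Hs x *v h)) (at x)"
    and hess_cont: "continuous_on UNIV Hs"
begin

lemma bdd_above_abs_hessian_box: "bdd_above ((\<lambda>x. \<bar>Hs x $ k $ l\<bar>) ` agd_box T p j t1 (T n) s)"
  using hess_cont agd_box_bounded by (rule bdd_above_abs_hessian)

lemma abs_hessian_le_Hbox:
  "x \<in> agd_box T p l t1 (T n) s \<Longrightarrow> \<bar>Hs x $ k $ l\<bar> \<le> Hbox Hs T p k l t1 (T n) s"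
  unfolding Hbox_def using bdd_above_abs_hessian_box by (rule Hsup_upper)

lemma Hbox_nonneg: "t1 \<le> T n \<Longrightarrow> 0 \<le> Hbox Hs T p k l t1 (T n) s"
  unfolding Hbox_def using bdd_above_abs_hessian_box agd_box_nonempty by (rule Hsup_nonneg)

lemma Hbox_antimono:
  assumes "t1' \<le> t1" "t1 \<le> T n"
  shows "Hbox Hs T p k l t1 (T n) s \<le> Hbox Hs T p k l t1' (T n) s"
  unfolding Hbox_def
proof (rule Hsup_mono[OF bdd_above_abs_hessian_box])
  show "agd_box T p l t1 (T n) s \<noteq> {}" using agd_box_nonempty[OF assms(2)] by blast
qed (rule agd_box_antimono[OF assms(1)])

lemma gradient_change_in_box:
  assumes "lo \<le> q" and no_j: "\<And>m. lo \<le> m \<Longrightarrow> m < q \<Longrightarrow> J m \<noteq> j"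
    and hull: "\<And>i. i \<noteq> j \<Longrightarrow> x $ i \<in> closure (convex hull ((\<lambda>r. p r $ i) ` {lo..q}))"
    and xj: "x $ j = p q $ j"
  shows "\<bar>G x $ j - G (p q) $ j\<bar> \<le> (\<Sum>r\<in>{lo..<q}. Hbox Hs T p (J r) j (T r) (T q) (p q $ j) * \<bar>dp p J r\<bar>)"
proof -
  obtain s where s: "crossing_indices lo q j x s"
    using crossing_indices_exist[OF assms(1) hull] by blast
  define z where "z = staircase q j x s"
  have step: "\<bar>G (z (Suc r)) $ j - G (z r) $ j\<bar> \<le> Hbox Hs T p (J r) j (T r) (T q) (p q $ j) * \<bar>dp p J r\<bar>"
    if r: "lo \<le> r" "r < q" for r
  proof -
    have seg: "closed_segment (z r) (z (Suc r)) \<subseteq> agd_box T p j (T r) (T q) (p q $ j)"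
      unfolding z_def using staircase_in_box[OF s r(2)] by (intro closed_segment_subset agd_box_convex) auto
    have "\<bar>G (z (Suc r)) $ j - G (z r) $ j\<bar>
        \<le> Hbox Hs T p (J r) j (T r) (T q) (p q $ j) * \<bar>z (Suc r) $ J r - z r $ J r\<bar>"
    proof (rule gradient_component_change_along_axis[OF grad hess hess_cont])
      show "z (Suc r) $ i = z r $ i" if "i \<noteq> J r" for i
        unfolding z_def using staircase_step_other[OF s r(2) that] .
      show "\<bar>Hs w $ J r $ j\<bar> \<le> Hbox Hs T p (J r) j (T r) (T q) (p q $ j)"
        if "w \<in> closed_segment (z r) (z (Suc r))" for w
        using seg that by (intro abs_hessian_le_Hbox) blast
    qed
    also have "\<dots> \<le> Hbox Hs T p (J r) j (T r) (T q) (p q $ j) * \<bar>dp p J r\<bar>"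
      using staircase_step_moved[OF s r(2)] no_j[OF r] Hbox_nonneg r(2)
      unfolding z_def by (intro mult_left_mono) auto
    finally show ?thesis .
  qed
  have "G (p q) $ j - G x $ j = (\<Sum>r\<in>{lo..<q}. G (z (Suc r)) $ j - G (z r) $ j)"
    using sum_Suc_diff'[OF assms(1), of "\<lambda>r. G (z r) $ j"]
      staircase_start[OF xj s] staircase_end[OF s] unfolding z_def by simp
  then have "\<bar>G x $ j - G (p q) $ j\<bar> = \<bar>\<Sum>r\<in>{lo..<q}. G (z (Suc r)) $ j - G (z r) $ j\<bar>"
    by (simp only: abs_minus_commute)
  also have "\<dots> \<le> (\<Sum>r\<in>{lo..<q}. \<bar>G (z (Suc r)) $ j - G (z r) $ j\<bar>)"
    by (rule sum_abs)
  also have "\<dots> \<le> (\<Sum>r\<in>{lo..<q}. Hbox Hs T p (J r) j (T r) (T q) (p q $ j) * \<bar>dp p J r\<bar>)"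
    using step by (intro sum_mono) auto
  finally show ?thesis .
qed

text \<open>
  weight q m is H_{k_i j}^[\<beta>_i,t](p_j^t) for the update m at time \<beta>_i, and drift q bounds how far
  \<nabla>_j \<phi> moves across P_j^[\<tau>_j,t].
\<close>

abbreviation weight :: "nat \<Rightarrow> nat \<Rightarrow> real" where
  "weight q m \<equiv> Hbox Hs T p (J m) (J q) (T m) (T q) (p q $ J q)"

abbreviation drift :: "nat \<Rightarrow> real" where
  "drift q \<equiv> \<Sum>m\<in>recent q. weight q m * \<bar>dp p J m\<bar>"

lemma weight_nonneg: "m < q \<Longrightarrow> 0 \<le> weight q m"
  by (intro Hbox_nonneg) simp

lemma gradient_drift_bound:
  assumes "x \<in> agd_box T p (J q) (last_upd T J q (J q)) (T q) (p q $ J q)"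
  shows "\<bar>G x $ J q - G (p q) $ J q\<bar> \<le> drift q"
proof -
  obtain lo where lo: "lo \<le> q" "recent q = {lo..<q}" "\<And>m. lo \<le> m \<Longrightarrow> m < q \<Longrightarrow> J m \<noteq> J q"
    "\<And>t' i. last_upd T J q (J q) \<le> t' \<Longrightarrow> t' \<le> T q \<Longrightarrow> i \<noteq> J q
       \<Longrightarrow> pt T p t' $ i \<in> (\<lambda>r. p r $ i) ` {lo..q}"
    by (rule recent_window) blast
  have hull: "x $ i \<in> closure (convex hull ((\<lambda>r. p r $ i) ` {lo..q}))" if "i \<noteq> J q" for i
  proof -
    have "x $ i \<in> closure (convex hull ((\<lambda>t'. pt T p t' $ i) ` {last_upd T J q (J q)..T q}))"
      using assms that by (auto simp: agd_box_def)
    also have "\<dots> \<subseteq> closure (convex hull ((\<lambda>r. p r $ i) ` {lo..q}))"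
      using lo(4) that by (intro closure_mono hull_mono) auto
    finally show ?thesis .
  qed
  moreover have "x $ J q = p q $ J q" using assms by (simp add: agd_box_def)
  ultimately have "\<bar>G x $ J q - G (p q) $ J q\<bar>
      \<le> (\<Sum>r\<in>{lo..<q}. Hbox Hs T p (J r) (J q) (T r) (T q) (p q $ J q) * \<bar>dp p J r\<bar>)"
    using gradient_change_in_box[OF lo(1) lo(3)] by blast
  then show ?thesis by (simp only: lo(2))
qed

lemma pt_in_recent_box:
  assumes "last_upd T J q (J q) < t'" "t' \<le> T q"
  shows "pt T p t' \<in> agd_box T p (J q) (last_upd T J q (J q)) (T q) (p q $ J q)"
proof -
  obtain lo where lo: "\<And>m. lo \<le> m \<Longrightarrow> m < q \<Longrightarrow> J m \<noteq> J q"
    "\<And>t'. last_upd T J q (J q) < t' \<Longrightarrow> t' \<le> T q \<Longrightarrow> pt T p t' \<in> p ` {lo..q}"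
    by (rule recent_window) blast
  obtain r where "lo \<le> r" "r \<le> q" "pt T p t' = p r" using lo(2)[OF assms] by auto
  then have "pt T p t' $ J q = p q $ J q"
    using p_nth_unchanged[of r q "J q"] lo(1) by simp
  then show ?thesis
    using assms by (auto simp: agd_box_def intro: pt_nth_in_hull)
qed

end

section \<open>One-step estimates\<close>

lemma integral_le_length_mult:
  fixes f :: "real \<Rightarrow> real"
  assumes "a \<le> b" "0 \<le> K" and bound: "\<And>x. a < x \<Longrightarrow> x \<le> b \<Longrightarrow> f x \<le> K"
  shows "integral {a..b} f \<le> (b - a) * K"
proof -
  define g where "g x = (if x = a then K else f x)" for x
  have "integral {a..b} f = integral {a..b} g"
    by (rule integral_spike[of "{a}"]) (auto simp: g_def)
  moreover have "integral {a..b} g \<le> (b - a) * K"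
  proof (cases "g integrable_on {a..b}")
    case True
    have "integral {a..b} g \<le> integral {a..b} (\<lambda>x. K)"
      using bound by (intro integral_le[OF True integrable_const_ivl]) (auto simp: g_def)
    then show ?thesis using assms(1) by (simp add: mult.commute)
  qed (use assms in \<open>simp add: not_integrable_integral\<close>)
  ultimately show ?thesis by simp
qed

lemma mult_le_weighted_squares:
  fixes u v c :: real
  assumes "0 < c"
  shows "u * v \<le> c * u\<^sup>2 + v\<^sup>2 / (4 * c)"
proof -
  have "0 \<le> (2 * c * u - v)\<^sup>2" by simp
  then have "4 * c * (u * v) \<le> 4 * c * (c * u\<^sup>2 + v\<^sup>2 / (4 * c))"
    using assms by (simp add: power2_eq_square algebra_simps)
  then show ?thesis using assms by simp
qed

lemma weighted_Cauchy_Schwarz_sum: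
  fixes h d w e :: "'a \<Rightarrow> real"
  assumes "\<And>m. m \<in> A \<Longrightarrow> 0 \<le> h m" "\<And>m. m \<in> A \<Longrightarrow> 0 < d m" "\<And>m. m \<in> A \<Longrightarrow> 0 < w m"
  shows "(\<Sum>m\<in>A. h m * \<bar>e m\<bar>)\<^sup>2 \<le> (\<Sum>m\<in>A. h m * d m / w m) * (\<Sum>m\<in>A. w m * h m * (e m)\<^sup>2 / d m)"
proof -
  define a where "a m = sqrt (h m * d m / w m)" for m
  define b where "b m = sqrt (w m * h m / d m) * \<bar>e m\<bar>" for m
  have ab: "a m * b m = h m * \<bar>e m\<bar>" if "m \<in> A" for m
  proof -
    have "h m * d m / w m * (w m * h m / d m) = (h m)\<^sup>2"
      using assms(2,3)[OF that] by (simp add: field_simps power2_eq_square)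
    then show ?thesis
      using assms(1)[OF that] by (simp add: a_def b_def mult.assoc flip: real_sqrt_mult)
  qed
  have a2: "(a m)\<^sup>2 = h m * d m / w m" if "m \<in> A" for m
    unfolding a_def using assms[OF that] by simp
  have b2: "(b m)\<^sup>2 = w m * h m * (e m)\<^sup>2 / d m" if "m \<in> A" for m
    unfolding b_def using assms[OF that] by (simp add: power_mult_distrib)
  have "(\<Sum>m\<in>A. h m * \<bar>e m\<bar>)\<^sup>2 = (\<Sum>m\<in>A. a m * b m)\<^sup>2" using ab by simp
  also have "\<dots> \<le> (\<Sum>m\<in>A. (a m)\<^sup>2) * (\<Sum>m\<in>A. (b m)\<^sup>2)" by (rule Cauchy_Schwarz_ineq_sum)
  also have "\<dots> = (\<Sum>m\<in>A. h m * d m / w m) * (\<Sum>m\<in>A. w m * h m * (e m)\<^sup>2 / d m)"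
    using a2 b2 by simp
  finally show ?thesis .
qed

locale agd_controlled = agd_c2 T J p \<phi> G Hs
  for T :: "nat \<Rightarrow> real" and J :: "nat \<Rightarrow> 'n::finite" and p :: "nat \<Rightarrow> real^'n"
    and \<phi> :: "real^'n \<Rightarrow> real" and G :: "real^'n \<Rightarrow> real^'n" and Hs :: "real^'n \<Rightarrow> real^'n^'n" +
  fixes ptil :: "nat \<Rightarrow> real^'n" and \<gamma> :: "nat \<Rightarrow> real" and \<gamma>bar :: "'n \<Rightarrow> real"
    and \<xi> :: "nat \<Rightarrow> 'n \<Rightarrow> real" and \<alpha> \<epsilon>F \<epsilon>B :: real
  assumes dt_le_1: "\<And>k. dt T J k \<le> 1"
    and \<gamma>_pos: "\<And>k. 0 < \<gamma> k"
    and ptil_box: "\<And>k. ptil k \<in> agd_box T p (J k) (last_upd T J k (J k)) (T k) (p k $ J k)"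
    and upd_j: "\<And>k. p (Suc k) $ J k = p k $ J k - G (ptil k) $ J k / \<gamma> k * dt T J k"
    and \<alpha>_pos: "0 < \<alpha>" and \<epsilon>B_pos: "0 < \<epsilon>B"
    and \<xi>_pos: "\<And>k i. i \<noteq> J k \<Longrightarrow> 0 < \<xi> k i"
    and A1: "\<And>k x. (\<forall>i. i \<noteq> J k \<longrightarrow> x $ i = p k $ i)
               \<Longrightarrow> x $ J k \<in> closed_segment (p k $ J k) (p (Suc k) $ J k)
               \<Longrightarrow> \<phi> x - \<phi> (p k) - G (p k) $ J k * (x $ J k - p k $ J k) \<le> \<gamma> k / \<alpha> * (x $ J k - p k $ J k)\<^sup>2"
    and A2: "\<And>k. \<gamma> k \<le> \<gamma>bar (J k)"
    and A3: "\<And>k. (\<Sum>i\<in>UNIV - {J k}. \<xi> k i * Hbox Hs T p (J k) i (T k) (next_upd T J i (T k)) (p k $ i))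
               \<le> \<epsilon>F * \<gamma> k"
    and A4: "\<And>k. (\<Sum>i\<in>UNIV - {J k}.
                Max ({1 / \<xi> m (J k) | m. m < k \<and> last_upd T J k (J k) < T m \<and> J m = i} \<union> {0})
                * Hbox Hs T p i (J k) (last_upd T J k (J k)) (T k) (p k $ J k)) \<le> \<epsilon>B * \<gamma> k"
begin

text \<open>
  progress q is \<gamma>_j^t (\<Delta>p_j)^2/\<Delta>t_j and backlog q the sum on the right-hand side of the theorem.
\<close>

abbreviation progress :: "nat \<Rightarrow> real" where
  "progress q \<equiv> \<gamma> q * (dp p J q)\<^sup>2 / dt T J q"

abbreviation backlog :: "nat \<Rightarrow> real" where
  "backlog q \<equiv> \<Sum>m\<in>recent q. \<xi> m (J q) * weight q m * (dp p J m)\<^sup>2 / dt T J m"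

abbreviation dual_weight :: "nat \<Rightarrow> real" where
  "dual_weight q \<equiv> \<Sum>m\<in>recent q. weight q m * dt T J m / \<xi> m (J q)"

lemma recent_other_coordinate: "m \<in> recent q \<Longrightarrow> J m \<noteq> J q"
  using last_upd_ge[of m q "J q"] by force

lemma xi_recent_pos: "m \<in> recent q \<Longrightarrow> 0 < \<xi> m (J q)"
  by (metis \<xi>_pos recent_other_coordinate)

lemma backlog_term_nonneg: "m \<in> recent q \<Longrightarrow> 0 \<le> \<xi> m (J q) * weight q m * (dp p J m)\<^sup>2 / dt T J m"
  using xi_recent_pos[of m q] weight_nonneg[of m q] dt_pos[of m] by simp

lemma backlog_nonneg: "0 \<le> backlog q"
  using backlog_term_nonneg by (intro sum_nonneg) blast

lemma progress_nonneg: "0 \<le> progress q"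
  using \<gamma>_pos[of q] dt_pos[of q] by simp

lemma dual_weight_coordinate_le:
  assumes "k \<noteq> J q"
  shows "(\<Sum>m\<in>{m \<in> recent q. J m = k}. weight q m * dt T J m / \<xi> m (J q))
    \<le> 2 * (Max ({1 / \<xi> m (J q) | m. m < q \<and> last_upd T J q (J q) < T m \<and> J m = k} \<union> {0})
         * Hbox Hs T p k (J q) (last_upd T J q (J q)) (T q) (p q $ J q))"
proof -
  define Mk where "Mk = {m \<in> recent q. J m = k}"
  define Mx where "Mx = Max ({1 / \<xi> m (J q) | m. m < q \<and> last_upd T J q (J q) < T m \<and> J m = k} \<union> {0})"
  define H where "H = Hbox Hs T p k (J q) (last_upd T J q (J q)) (T q) (p q $ J q)"
  have fin: "finite {1 / \<xi> m (J q) | m. m < q \<and> last_upd T J q (J q) < T m \<and> J m = k}"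
    by (rule finite_subset[of _ "(\<lambda>m. 1 / \<xi> m (J q)) ` {..<q}"]) auto
  have Mx: "0 \<le> Mx" "\<And>m. m \<in> Mk \<Longrightarrow> 1 / \<xi> m (J q) \<le> Mx"
    unfolding Mx_def Mk_def using fin by (auto intro: Max_ge)
  have H: "0 \<le> H" unfolding H_def using last_upd_less by (intro Hbox_nonneg less_imp_le)
  have bound: "weight q m * dt T J m / \<xi> m (J q) \<le> Mx * H * dt T J m" if m: "m \<in> Mk" for m
  proof -
    have "weight q m \<le> H"
      using m unfolding H_def Mk_def by (auto intro!: Hbox_antimono)
    moreover have "0 < \<xi> m (J q)" "0 \<le> weight q m"
      using m \<xi>_pos[of "J q" m] weight_nonneg unfolding Mk_def by (auto simp: assms[symmetric])
    ultimately have "weight q m * dt T J m * (1 / \<xi> m (J q)) \<le> H * dt T J m * Mx"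
      using Mx(2)[OF m] dt_pos[of m] H by (intro mult_mono mult_right_mono) auto
    then show ?thesis by (simp add: mult_ac)
  qed
  \<comment> \<open>the updates of k inside (\<tau>_j, t) have elapsed times summing to at most 1 + (t - \<tau>_j)\<close>
  have "(\<Sum>m\<in>Mk. dt T J m) \<le> 2"
  proof (cases "Mk = {}")
    case False
    have "finite Mk" unfolding Mk_def by simp
    then have "(\<Sum>m\<in>Mk. dt T J m) \<le> 1 + T (Max Mk) - T (Min Mk)"
      using False by (intro sum_dt_same_coordinate[OF dt_le_1]) (auto simp: Mk_def)
    moreover have "T (Max Mk) < T q" "last_upd T J q (J q) < T (Min Mk)"
      using Max_in[OF \<open>finite Mk\<close> False] Min_in[OF \<open>finite Mk\<close> False] unfolding Mk_def by auto
    moreover have "T q - last_upd T J q (J q) \<le> 1" using dt_le_1[of q] by (simp add: dt_def)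
    ultimately show ?thesis by linarith
  qed simp
  then have "(\<Sum>m\<in>Mk. Mx * H * dt T J m) \<le> Mx * H * 2"
    using Mx(1) H by (simp add: mult_left_mono flip: sum_distrib_left)
  moreover have "(\<Sum>m\<in>Mk. weight q m * dt T J m / \<xi> m (J q)) \<le> (\<Sum>m\<in>Mk. Mx * H * dt T J m)"
    using bound by (rule sum_mono)
  ultimately have "(\<Sum>m\<in>Mk. weight q m * dt T J m / \<xi> m (J q)) \<le> Mx * H * 2"
    by linarith
  then show ?thesis unfolding Mk_def Mx_def H_def by simp
qed

lemma dual_weight_le: "dual_weight q \<le> 2 * (\<epsilon>B * \<gamma> q)"
proof -
  have "dual_weight q = (\<Sum>k\<in>UNIV - {J q}. \<Sum>m\<in>{m \<in> recent q. J m = k}. weight q m * dt T J m / \<xi> m (J q))"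
    using recent_other_coordinate by (intro sum.group[symmetric]) auto
  also have "\<dots> \<le> (\<Sum>k\<in>UNIV - {J q}.
      2 * (Max ({1 / \<xi> m (J q) | m. m < q \<and> last_upd T J q (J q) < T m \<and> J m = k} \<union> {0})
         * Hbox Hs T p k (J q) (last_upd T J q (J q)) (T q) (p q $ J q)))"
    by (intro sum_mono dual_weight_coordinate_le) auto
  also have "\<dots> \<le> 2 * (\<epsilon>B * \<gamma> q)"
    using A4[of q] by (simp add: sum_distrib_left[symmetric])
  finally show ?thesis .
qed

end

context agd_controlled
begin

lemma dp_eq_step: "dp p J q = - G (ptil q) $ J q / \<gamma> q * dt T J q"
  using upd_j[of q] by (simp add: dp_def)

lemma stale_gradient_error: "\<bar>G (ptil q) $ J q - G (p q) $ J q\<bar> \<le> drift q"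
  using ptil_box by (rule gradient_drift_bound)

lemma drift_sq_le: "(drift q)\<^sup>2 \<le> 2 * \<epsilon>B * \<gamma> q * backlog q"
proof -
  have "(drift q)\<^sup>2 \<le> dual_weight q * backlog q"
    using weight_nonneg dt_pos xi_recent_pos by (intro weighted_Cauchy_Schwarz_sum) auto
  also have "\<dots> \<le> 2 * (\<epsilon>B * \<gamma> q) * backlog q"
    using dual_weight_le backlog_nonneg by (rule mult_right_mono)
  finally show ?thesis by simp
qed

lemma step_sq_le_progress: "\<gamma> q * (dp p J q)\<^sup>2 \<le> progress q"
  using \<gamma>_pos[of q] dt_pos[of q] dt_le_1[of q]
  by (simp add: le_divide_eq mult_left_le)

lemma drift_mult_step_le: "drift q * \<bar>dp p J q\<bar> \<le> backlog q + 2 * \<epsilon>B * progress q"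
proof -
  define c where "c = 1 / (2 * \<epsilon>B * \<gamma> q)"
  have c: "0 < c" using \<epsilon>B_pos \<gamma>_pos[of q] by (simp add: c_def)
  have "drift q * \<bar>dp p J q\<bar> \<le> c * (drift q)\<^sup>2 + \<bar>dp p J q\<bar>\<^sup>2 / (4 * c)"
    using c by (rule mult_le_weighted_squares)
  also have "c * (drift q)\<^sup>2 \<le> c * (2 * \<epsilon>B * \<gamma> q * backlog q)"
    using drift_sq_le c by (intro mult_left_mono) auto
  also have "c * (2 * \<epsilon>B * \<gamma> q * backlog q) = backlog q"
    using \<epsilon>B_pos \<gamma>_pos[of q] by (simp add: c_def)
  also have "\<bar>dp p J q\<bar>\<^sup>2 / (4 * c) = \<epsilon>B / 2 * (\<gamma> q * (dp p J q)\<^sup>2)"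
    by (simp add: c_def)
  also have "\<dots> \<le> \<epsilon>B / 2 * progress q"
    using step_sq_le_progress[of q] \<epsilon>B_pos by (intro mult_left_mono) auto
  also have "\<dots> \<le> 2 * \<epsilon>B * progress q"
    using \<epsilon>B_pos progress_nonneg[of q] by (intro mult_right_mono) auto
  finally show ?thesis by simp
qed

lemma phi_decrease: "(1 - 1 / \<alpha> - 2 * \<epsilon>B) * progress q - backlog q \<le> \<phi> (p q) - \<phi> (p (Suc q))"
proof -
  define g gt \<Delta>p where "g = G (p q) $ J q" and "gt = G (ptil q) $ J q" and "\<Delta>p = dp p J q"
  have "\<phi> (p (Suc q)) - \<phi> (p q) - g * \<Delta>p \<le> \<gamma> q / \<alpha> * \<Delta>p\<^sup>2"
    using A1[of q "p (Suc q)"] upd_other by (simp add: g_def \<Delta>p_def dp_def)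
  moreover have "\<gamma> q / \<alpha> * \<Delta>p\<^sup>2 \<le> progress q / \<alpha>"
    using divide_right_mono[OF step_sq_le_progress[of q], of \<alpha>] \<alpha>_pos by (simp add: \<Delta>p_def)
  moreover have "- (gt * \<Delta>p) = progress q"
    using \<gamma>_pos[of q] dt_pos[of q] unfolding gt_def \<Delta>p_def dp_eq_step
    by (simp add: field_simps power2_eq_square)
  moreover have "- (drift q * \<bar>\<Delta>p\<bar>) \<le> gt * \<Delta>p - g * \<Delta>p"
  proof -
    have "\<bar>(gt - g) * \<Delta>p\<bar> \<le> drift q * \<bar>\<Delta>p\<bar>"
      unfolding abs_mult gt_def g_def using stale_gradient_error by (rule mult_right_mono) simp
    then show ?thesis by (simp add: abs_le_iff left_diff_distrib)
  qed
  moreover have "drift q * \<bar>\<Delta>p\<bar> \<le> backlog q + 2 * \<epsilon>B * progress q"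
    unfolding \<Delta>p_def by (rule drift_mult_step_le)
  moreover have lin: "(1 - 1 / \<alpha> - 2 * \<epsilon>B) * P = P - P / \<alpha> - 2 * \<epsilon>B * P" for P :: real
    using \<alpha>_pos by (simp add: field_simps)
  ultimately show ?thesis using lin[of "progress q"] by linarith
qed

lemma gradient_along_recent_path:
  assumes "last_upd T J q (J q) < t'" "t' \<le> T q"
  shows "\<bar>G (pt T p t') $ J q\<bar> \<le> \<bar>G (ptil q) $ J q\<bar> + 2 * drift q"
  using gradient_drift_bound[OF pt_in_recent_box[OF assms]] stale_gradient_error[of q] by linarith

lemma gradient_integral_le:
  "integral {last_upd T J q (J q)..T q} (\<lambda>t'. (G (pt T p t') $ J q)\<^sup>2 / \<gamma>bar (J q))
    \<le> (1 + 4 * \<epsilon>B) * progress q + (2 + 8 * \<epsilon>B) * backlog q"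
proof -
  define a S \<Delta>t where "a = \<bar>G (ptil q) $ J q\<bar>" and "S = drift q" and "\<Delta>t = dt T J q"
  define E where "E = \<Delta>t / \<gamma> q"
  have \<Delta>t: "0 < \<Delta>t" "\<Delta>t \<le> 1" "\<Delta>t = T q - last_upd T J q (J q)"
    using dt_pos dt_le_1 by (simp_all add: \<Delta>t_def dt_def)
  have E: "0 < E" using \<Delta>t \<gamma>_pos[of q] by (simp add: E_def)
  have "integral {last_upd T J q (J q)..T q} (\<lambda>t'. (G (pt T p t') $ J q)\<^sup>2 / \<gamma>bar (J q))
      \<le> \<Delta>t * ((a + 2 * S)\<^sup>2 / \<gamma> q)"
    unfolding \<Delta>t(3)
  proof (rule integral_le_length_mult)
    fix t' assume "last_upd T J q (J q) < t'" "t' \<le> T q"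
    then have "\<bar>G (pt T p t') $ J q\<bar> \<le> a + 2 * S"
      unfolding a_def S_def by (rule gradient_along_recent_path)
    then have "\<bar>G (pt T p t') $ J q\<bar>\<^sup>2 \<le> (a + 2 * S)\<^sup>2"
      by (rule power_mono) simp
    then have "(G (pt T p t') $ J q)\<^sup>2 / \<gamma>bar (J q) \<le> (a + 2 * S)\<^sup>2 / \<gamma>bar (J q)"
      using A2[of q] \<gamma>_pos[of q] by (intro divide_right_mono) auto
    also have "\<dots> \<le> (a + 2 * S)\<^sup>2 / \<gamma> q"
      using A2[of q] \<gamma>_pos[of q] by (intro divide_left_mono) auto
    finally show "(G (pt T p t') $ J q)\<^sup>2 / \<gamma>bar (J q) \<le> (a + 2 * S)\<^sup>2 / \<gamma> q" .
  qed (use last_upd_less \<gamma>_pos in \<open>auto simp: less_imp_le\<close>)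
  also have "\<Delta>t * ((a + 2 * S)\<^sup>2 / \<gamma> q) = E * a\<^sup>2 + 4 * (E * (a * S)) + 4 * (E * S\<^sup>2)"
    by (simp add: E_def power2_eq_square algebra_simps add_divide_distrib)
  also have "\<dots> \<le> (1 + 4 * \<epsilon>B) * progress q + (2 + 8 * \<epsilon>B) * backlog q"
  proof -
    have Ea: "E * a\<^sup>2 = progress q"
      using \<Delta>t \<gamma>_pos[of q] by (simp add: E_def a_def \<Delta>t_def dp_eq_step field_simps power2_eq_square)
    have ES: "E * S\<^sup>2 \<le> 2 * \<epsilon>B * \<Delta>t * backlog q"
      using mult_left_mono[OF drift_sq_le[of q] less_imp_le[OF E]] \<gamma>_pos[of q]
      by (simp add: E_def S_def algebra_simps)
    have "E * (a * S) \<le> E * (\<epsilon>B * a\<^sup>2 + S\<^sup>2 / (4 * \<epsilon>B))"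
      using mult_le_weighted_squares[OF \<epsilon>B_pos] E by (intro mult_left_mono) auto
    also have "\<dots> = \<epsilon>B * (E * a\<^sup>2) + E * S\<^sup>2 / (4 * \<epsilon>B)"
      by (simp add: algebra_simps)
    also have "\<dots> = \<epsilon>B * progress q + E * S\<^sup>2 / (4 * \<epsilon>B)"
      by (simp only: Ea)
    also have "E * S\<^sup>2 / (4 * \<epsilon>B) \<le> \<Delta>t * backlog q / 2"
      using ES \<epsilon>B_pos by (simp add: divide_le_eq mult_ac)
    finally have "E * (a * S) \<le> \<epsilon>B * progress q + \<Delta>t * backlog q / 2" by simp
    moreover have "\<Delta>t * backlog q \<le> backlog q"
      using \<Delta>t backlog_nonneg[of q] by (simp add: mult_left_le_one_le)
    moreover have "\<epsilon>B * (\<Delta>t * backlog q) \<le> \<epsilon>B * backlog q"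
      using calculation(2) \<epsilon>B_pos by simp
    moreover have lin: "(1 + 4 * \<epsilon>B) * P + (2 + 8 * \<epsilon>B) * Q = P + 4 * (\<epsilon>B * P) + 2 * Q + 8 * (\<epsilon>B * Q)"
      "2 * \<epsilon>B * \<Delta>t * Q = 2 * (\<epsilon>B * (\<Delta>t * Q))" for P Q :: real
      by (simp_all add: algebra_simps)
    ultimately show ?thesis
      using Ea ES lin(1)[of "progress q" "backlog q"] lin(2)[of "backlog q"] by linarith
  qed
  finally show ?thesis .
qed

lemma kept_terms_ge:
  assumes "0 \<le> c2"
  shows "(2 - c2) * backlog q
    \<le> (\<Sum>m\<in>recent q. \<xi> m (J q) * weight q m * (dp p J m)\<^sup>2 / dt T J m * (2 - c2 * (T q - T m)))"
proof -
  have "(2 - c2) * backlog q = (\<Sum>m\<in>recent q. \<xi> m (J q) * weight q m * (dp p J m)\<^sup>2 / dt T J m * (2 - c2))"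
    by (simp add: sum_distrib_left mult_ac)
  also have "\<dots> \<le> (\<Sum>m\<in>recent q. \<xi> m (J q) * weight q m * (dp p J m)\<^sup>2 / dt T J m * (2 - c2 * (T q - T m)))"
  proof (rule sum_mono)
    fix m assume m: "m \<in> recent q"
    have "T q - T m \<le> 1" using m dt_le_1[of q] by (simp add: dt_def)
    then have "2 - c2 \<le> 2 - c2 * (T q - T m)" using assms by (simp add: mult_left_le)
    then show "\<xi> m (J q) * weight q m * (dp p J m)\<^sup>2 / dt T J m * (2 - c2)
        \<le> \<xi> m (J q) * weight q m * (dp p J m)\<^sup>2 / dt T J m * (2 - c2 * (T q - T m))"
      using backlog_term_nonneg[OF m] by (rule mult_left_mono)
  qed
  finally show ?thesis .
qed

lemma new_terms_le:
  "(\<Sum>i\<in>UNIV - {J q}. \<xi> q i * Hbox Hs T p (J q) i (T q) (next_upd T J i (T q)) (p q $ i)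
      * (dp p J q)\<^sup>2 / dt T J q * (2 - c2 * (T q - T q))) \<le> 2 * \<epsilon>F * progress q"
proof -
  have "(\<Sum>i\<in>UNIV - {J q}. \<xi> q i * Hbox Hs T p (J q) i (T q) (next_upd T J i (T q)) (p q $ i)
      * (dp p J q)\<^sup>2 / dt T J q * (2 - c2 * (T q - T q)))
    = 2 * ((dp p J q)\<^sup>2 / dt T J q)
      * (\<Sum>i\<in>UNIV - {J q}. \<xi> q i * Hbox Hs T p (J q) i (T q) (next_upd T J i (T q)) (p q $ i))"
    by (simp add: sum_distrib_left mult_ac)
  also have "\<dots> \<le> 2 * ((dp p J q)\<^sup>2 / dt T J q) * (\<epsilon>F * \<gamma> q)"
    using A3 dt_pos[of q] by (intro mult_left_mono) auto
  finally show ?thesis by (simp add: mult_ac)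
qed

end

text \<open>
  Convexity and nonnegativity of \<phi>, the unboundedness of T, the recurrence of every coordinate and
  the condition 1/\<alpha> + 2\<epsilon>_B + 2\<epsilon>_F < 1 are not needed for this one-step estimate.
\<close>

theorem mainTheorem4:
  fixes \<phi> :: "real^'n::finite \<Rightarrow> real" and G :: "real^'n \<Rightarrow> real^'n"
    and Hs :: "real^'n \<Rightarrow> real^'n^'n"
    and T :: "nat \<Rightarrow> real" and J :: "nat \<Rightarrow> 'n" and p :: "nat \<Rightarrow> real^'n"
    and ptil :: "nat \<Rightarrow> real^'n" and \<gamma> :: "nat \<Rightarrow> real" and \<gamma>bar :: "'n \<Rightarrow> real"
    and \<xi> :: "nat \<Rightarrow> 'n \<Rightarrow> real"
    and \<alpha> \<epsilon>F \<epsilon>B c1 c2 :: real and q :: nat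
  assumes grad: "\<forall>x. (\<phi> has_derivative (\<lambda>h. G x \<bullet> h)) (at x)"
    and hess: "\<forall>x. (G has_derivative (\<lambda>h. Hs x *v h)) (at x)"
    and hess_cont: "continuous_on UNIV Hs"
    and cvx: "convex_on UNIV \<phi>"
    and nonneg: "\<forall>x. 0 \<le> \<phi> x" and attained: "\<exists>x. \<phi> x = 0"
    and T_mono: "strict_mono T" and T_pos: "0 < T 0"
    and T_unbdd: "filterlim T at_top sequentially"
    and all_updated: "\<forall>i s. \<exists>m. s < T m \<and> J m = i"
    and dt_le: "\<forall>k. dt T J k \<le> 1"
    and \<gamma>_pos: "\<forall>k. 0 < \<gamma> k"
    and ptil_box: "\<forall>k. ptil k \<in> agd_box T p (J k) (last_upd T J k (J k)) (T k) (p k $ J k)"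
    and upd_j: "\<forall>k. p (Suc k) $ J k = p k $ J k - G (ptil k) $ J k / \<gamma> k * dt T J k"
    and upd_other: "\<forall>k i. i \<noteq> J k \<longrightarrow> p (Suc k) $ i = p k $ i"
    and \<alpha>_ge: "\<alpha> \<ge> 2" and \<epsilon>F_pos: "\<epsilon>F > 0" and \<epsilon>B_pos: "\<epsilon>B > 0"
    and eps_sum: "1 / \<alpha> + 2 * \<epsilon>B + 2 * \<epsilon>F < 1"
    and \<xi>_pos: "\<forall>k i. i \<noteq> J k \<longrightarrow> 0 < \<xi> k i"
    and A1: "\<forall>k x. (\<forall>i. i \<noteq> J k \<longrightarrow> x $ i = p k $ i)
               \<and> x $ J k \<in> closed_segment (p k $ J k) (p (Suc k) $ J k)
             \<longrightarrow> \<phi> x - \<phi> (p k) - G (p k) $ J k * (x $ J k - p k $ J k)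
                 \<le> \<gamma> k / \<alpha> * (x $ J k - p k $ J k)\<^sup>2"
    and A2: "\<forall>k. \<gamma> k \<le> \<gamma>bar (J k)"
    and A3: "\<forall>k. (\<Sum>i\<in>UNIV - {J k}. \<xi> k i
                * Hbox Hs T p (J k) i (T k) (next_upd T J i (T k)) (p k $ i)) \<le> \<epsilon>F * \<gamma> k"
    and A4: "\<forall>k. (\<Sum>i\<in>UNIV - {J k}.
                Max ({1 / \<xi> m (J k) | m. m < k \<and> last_upd T J k (J k) < T m \<and> J m = i} \<union> {0})
                * Hbox Hs T p i (J k) (last_upd T J k (J k)) (T k) (p k $ J k)) \<le> \<epsilon>B * \<gamma> k"
    and c1_pos: "c1 > 0" and c2_pos: "c2 > 0"
  shows "Phi \<phi> G Hs T J p \<gamma>bar \<xi> c1 c2 q (T q) - Phi \<phi> G Hs T J p \<gamma>bar \<xi> c1 c2 (Suc q) (T q)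
    \<ge> (1 - 1 / \<alpha> - 2 * \<epsilon>B - c1 * (1 + 4 * \<epsilon>B) - 2 * \<epsilon>F) * \<gamma> q * (dp p J q)\<^sup>2 / dt T J q
      + (1 - c2 - c1 * (2 + 8 * \<epsilon>B))
        * (\<Sum>m\<in>{m. m < q \<and> last_upd T J q (J q) < T m}.
             \<xi> m (J q) * Hbox Hs T p (J m) (J q) (T m) (T q) (p q $ J q) * (dp p J m)\<^sup>2 / dt T J m)"
proof -
  interpret agd_controlled T J p \<phi> G Hs ptil \<gamma> \<gamma>bar \<xi> \<alpha> \<epsilon>F \<epsilon>B
    using assms by unfold_locales auto
  define X Q where "X = progress q" and "Q = backlog q"
  define I where "I = integral {last_upd T J q (J q)..T q} (\<lambda>t'. (G (pt T p t') $ J q)\<^sup>2 / \<gamma>bar (J q))"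
  define kept where
    "kept = (\<Sum>m\<in>recent q. \<xi> m (J q) * weight q m * (dp p J m)\<^sup>2 / dt T J m * (2 - c2 * (T q - T m)))"
  define new where "new = (\<Sum>i\<in>UNIV - {J q}. \<xi> q i * Hbox Hs T p (J q) i (T q) (next_upd T J i (T q)) (p q $ i)
      * (dp p J q)\<^sup>2 / dt T J q * (2 - c2 * (T q - T q)))"
  have "Phi \<phi> G Hs T J p \<gamma>bar \<xi> c1 c2 q (T q) - Phi \<phi> G Hs T J p \<gamma>bar \<xi> c1 c2 (Suc q) (T q)
      = \<phi> (p q) - \<phi> (p (Suc q)) - c1 * I + kept - new"
    unfolding I_def kept_def new_def by (rule Phi_step_eq)
  moreover have "(1 - 1 / \<alpha> - 2 * \<epsilon>B) * X - Q \<le> \<phi> (p q) - \<phi> (p (Suc q))"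
    unfolding X_def Q_def by (rule phi_decrease)
  moreover have "c1 * I \<le> c1 * ((1 + 4 * \<epsilon>B) * X + (2 + 8 * \<epsilon>B) * Q)"
    unfolding I_def X_def Q_def using c1_pos by (intro mult_left_mono[OF gradient_integral_le]) simp
  moreover have "(2 - c2) * Q \<le> kept"
    unfolding kept_def Q_def using c2_pos by (intro kept_terms_ge) simp
  moreover have "new \<le> 2 * \<epsilon>F * X"
    unfolding new_def X_def by (rule new_terms_le)
  moreover have "(1 - 1 / \<alpha> - 2 * \<epsilon>B - c1 * (1 + 4 * \<epsilon>B) - 2 * \<epsilon>F) * \<gamma> q * (dp p J q)\<^sup>2 / dt T J q
      + (1 - c2 - c1 * (2 + 8 * \<epsilon>B)) * (\<Sum>m\<in>recent q. \<xi> m (J q) * weight q m * (dp p J m)\<^sup>2 / dt T J m)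
    = (1 - 1 / \<alpha> - 2 * \<epsilon>B - c1 * (1 + 4 * \<epsilon>B) - 2 * \<epsilon>F) * X + (1 - c2 - c1 * (2 + 8 * \<epsilon>B)) * Q"
    unfolding X_def Q_def by (simp add: mult.assoc)
  moreover have "(1 - 1 / \<alpha> - 2 * \<epsilon>B - c1 * (1 + 4 * \<epsilon>B) - 2 * \<epsilon>F) * X + (1 - c2 - c1 * (2 + 8 * \<epsilon>B)) * Q
    = ((1 - 1 / \<alpha> - 2 * \<epsilon>B) * X - Q) - c1 * ((1 + 4 * \<epsilon>B) * X + (2 + 8 * \<epsilon>B) * Q)
      + (2 - c2) * Q - 2 * \<epsilon>F * X"
    by (simp add: algebra_simps)
  ultimately show ?thesis by linarith
qed

end
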